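(* Let $G$ be a network, $s,t$ nodes and $S\in[S_{min},1]$. Let $(\pi_1,\pi_2)$ be an optimal solution of the CT-Constrained Survivability Min-QoS problem with $W(\pi_2)\ge W(\pi_1)$. Let $(\tilde\pi_1,\tilde\pi_2)$ be an optimal solution of the Constrained Survivability Min-Max-QoS problem with $W(\tilde\pi_2)\ge W(\tilde\pi_1)$. Then $W(\pi_2)\le 2\,W(\tilde\pi_2)$.
   Context: Network: a directed graph $G=(V,E)$ with $M=|E|$. Each link has a failure probability $p_e\in(0,p_{max}]$ with $p_{max}<1$, and a positive weight $w_e$. Let $S_{min}=(1-p_{max})^M$. Paths are identified with link sets, and $W(\pi)=\sum_{e\in\pi}w_e$. A survivable connection is a pair $(\pi_1,\pi_2)$ of simple $s$–$t$ paths; the two paths may coincide. Its survivability level is $\prod_{e\in\pi_1\cap\pi_2}(1-p_e)$, equal to $1$ if empty. CT-CSMQ problem: minimize $W(\pi_1)+W(\pi_2)$ over survivable connections with survivability level $\ge S$. Constrained Survivability Min-Max-QoS (CSMMQ) problem: find a survivable connection $(\pi_1,\pi_2)$ minimizing $W(\pi_2)$ subject to $W(\pi_1)\le W(\pi_2)$ and survivability level $\ge S$. *)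

theory Defs
  imports Complex_Main
begin

text \<open>A simple s-t path is given by a nonempty list of distinct vertices from s to t with
  consecutive pairs being links; the path is identified with its set of links.\<close>

definition simple_path :: "('v \<times> 'v) set \<Rightarrow> 'v \<Rightarrow> 'v \<Rightarrow> ('v \<times> 'v) set \<Rightarrow> bool" where
  "simple_path E s t \<pi> \<longleftrightarrow>
     (\<exists>vs. vs \<noteq> [] \<and> distinct vs \<and> hd vs = s \<and> last vs = t \<and>
           set (zip vs (tl vs)) \<subseteq> E \<and> \<pi> = set (zip vs (tl vs)))"

definition W :: "('v \<times> 'v \<Rightarrow> real) \<Rightarrow> ('v \<times> 'v) set \<Rightarrow> real" where
  "W w \<pi> = (\<Sum>e\<in>\<pi>. w e)"

definition surv_level :: "('v \<times> 'v \<Rightarrow> real) \<Rightarrow> ('v \<times> 'v) set \<Rightarrow> ('v \<times> 'v) set \<Rightarrow> real" where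
  "surv_level p \<pi>1 \<pi>2 = (\<Prod>e\<in>\<pi>1 \<inter> \<pi>2. 1 - p e)"

definition survivable_conn ::
  "('v \<times> 'v) set \<Rightarrow> 'v \<Rightarrow> 'v \<Rightarrow> ('v \<times> 'v) set \<Rightarrow> ('v \<times> 'v) set \<Rightarrow> bool" where
  "survivable_conn E s t \<pi>1 \<pi>2 \<longleftrightarrow> simple_path E s t \<pi>1 \<and> simple_path E s t \<pi>2"

definition ct_csmq_opt ::
  "('v \<times> 'v) set \<Rightarrow> ('v \<times> 'v \<Rightarrow> real) \<Rightarrow> ('v \<times> 'v \<Rightarrow> real) \<Rightarrow> 'v \<Rightarrow> 'v \<Rightarrow> real
     \<Rightarrow> ('v \<times> 'v) set \<Rightarrow> ('v \<times> 'v) set \<Rightarrow> bool" where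
  "ct_csmq_opt E p w s t S \<pi>1 \<pi>2 \<longleftrightarrow>
     survivable_conn E s t \<pi>1 \<pi>2 \<and> surv_level p \<pi>1 \<pi>2 \<ge> S \<and>
     (\<forall>\<sigma>1 \<sigma>2. survivable_conn E s t \<sigma>1 \<sigma>2 \<and> surv_level p \<sigma>1 \<sigma>2 \<ge> S \<longrightarrow>
        W w \<pi>1 + W w \<pi>2 \<le> W w \<sigma>1 + W w \<sigma>2)"

definition csmmq_opt ::
  "('v \<times> 'v) set \<Rightarrow> ('v \<times> 'v \<Rightarrow> real) \<Rightarrow> ('v \<times> 'v \<Rightarrow> real) \<Rightarrow> 'v \<Rightarrow> 'v \<Rightarrow> real
     \<Rightarrow> ('v \<times> 'v) set \<Rightarrow> ('v \<times> 'v) set \<Rightarrow> bool" where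
  "csmmq_opt E p w s t S \<pi>1 \<pi>2 \<longleftrightarrow>
     survivable_conn E s t \<pi>1 \<pi>2 \<and> W w \<pi>1 \<le> W w \<pi>2 \<and> surv_level p \<pi>1 \<pi>2 \<ge> S \<and>
     (\<forall>\<sigma>1 \<sigma>2. survivable_conn E s t \<sigma>1 \<sigma>2 \<and> W w \<sigma>1 \<le> W w \<sigma>2 \<and>
        surv_level p \<sigma>1 \<sigma>2 \<ge> S \<longrightarrow> W w \<pi>2 \<le> W w \<sigma>2)"

end

theory Submission
  imports Defs
begin

text \<open>The Min-Max-QoS optimum is feasible for CT-CSMQ, so
  W(\<pi>2) \<le> W(\<pi>1) + W(\<pi>2) \<le> W(\<tau>1) + W(\<tau>2) \<le> 2 W(\<tau>2),
  using nonnegative weights for the first and W(\<tau>1) \<le> W(\<tau>2) for the last step.\<close>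

lemma simple_path_subset:
  assumes "simple_path E s t \<pi>"
  shows "\<pi> \<subseteq> E"
  using assms unfolding simple_path_def by blast

lemma W_nonneg_if_links_nonneg:
  assumes "\<pi> \<subseteq> E" and "\<And>e. e \<in> E \<Longrightarrow> 0 \<le> w e"
  shows "0 \<le> W w \<pi>"
  unfolding W_def using assms by (intro sum_nonneg) blast

lemma ct_csmq_opt_le_csmmq_opt:
  assumes "ct_csmq_opt E p w s t S \<pi>1 \<pi>2" and "csmmq_opt E p w s t S \<tau>1 \<tau>2"
  shows "W w \<pi>1 + W w \<pi>2 \<le> W w \<tau>1 + W w \<tau>2"
  using assms unfolding ct_csmq_opt_def csmmq_opt_def by blast

theorem theorem9:
  fixes E :: "('v \<times> 'v) set" and p w :: "'v \<times> 'v \<Rightarrow> real"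
    and pmax S :: real and s t :: 'v
    and \<pi>1 \<pi>2 \<tau>1 \<tau>2 :: "('v \<times> 'v) set"
  assumes "finite E"
    and "pmax < 1"
    and "\<And>e. e \<in> E \<Longrightarrow> 0 < p e \<and> p e \<le> pmax"
    and "\<And>e. e \<in> E \<Longrightarrow> 0 < w e"
    and "(1 - pmax) ^ card E \<le> S" and "S \<le> 1"
    and "ct_csmq_opt E p w s t S \<pi>1 \<pi>2" and "W w \<pi>2 \<ge> W w \<pi>1"
    and "csmmq_opt E p w s t S \<tau>1 \<tau>2" and "W w \<tau>2 \<ge> W w \<tau>1"
  shows "W w \<pi>2 \<le> 2 * W w \<tau>2"
proof -
  have "simple_path E s t \<pi>1"
    using assms(7) unfolding ct_csmq_opt_def survivable_conn_def by blast
  then have "0 \<le> W w \<pi>1"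
    using assms(4) by (intro W_nonneg_if_links_nonneg[OF simple_path_subset]) (auto intro: less_imp_le)
  moreover have "W w \<pi>1 + W w \<pi>2 \<le> W w \<tau>1 + W w \<tau>2"
    using assms(7,9) by (rule ct_csmq_opt_le_csmmq_opt)
  ultimately show ?thesis
    using assms(10) by linarith
qed

end
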